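(* Let $G$ be the abelian group of sequences $(\alpha_i)_{i\in\mathbb N}\in\{-1,1\}^{\mathbb N}$ which are eventually equal to $1$ (coordinatewise multiplication). Let $G$ act on $c_0$ by $u(g)(\sum_ix_ie_i)=\sum_i\alpha_ix_ie_i$, on $\mathbb R$ trivially ($v(g)=\mathrm{Id}$), and on $c_0\oplus\mathbb R$ by $$\lambda(g)(x,y)=\Big(u(g)x+y\sum_{i:\alpha_i=-1}e_i,\;y\Big),\qquad g=(\alpha_i)_i.$$ Then $\lambda$ is a bounded representation, $0\to c_0\to c_0\oplus\mathbb R\to\mathbb R\to0$ is an exact sequence of $G$-spaces which splits as a sequence of Banach spaces but does not $G$-split. Consequently $\mathrm{Ext}(\mathbb R,c_0)=\{0\}$ while $\mathrm{Ext}_G(\mathbb R,c_0)\neq\{0\}$.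
   Context: $(e_i)$ is the unit vector basis of $c_0$. An exact sequence of $G$-spaces has $G$-equivariant bounded arrows. It $G$-splits if the quotient map admits a bounded linear $G$-equivariant right inverse (equivalently, the sequence is equivalent via a $G$-equivariant isomorphism to the direct sum with diagonal action). $\mathrm{Ext}(Y,X)$ is the set of equivalence classes of exact sequences $0\to X\to Z\to Y\to0$ of Banach spaces; $\mathrm{Ext}_G(Y,X)$ is the set of classes of exact sequences of $G$-spaces (with the given actions on $X$ and $Y$) under $G$-equivariant equivalence; $0$ denotes the class of split (resp. $G$-split) sequences. *)

theory Defs
  imports "HOL-Analysis.Analysis"
begin

text \<open>The ambient Banach space l-infinity = bounded (automatically continuous) functions
  on the discrete space nat with the sup norm; c0 is the closed subspace of null sequences.\<close>

type_synonym linf = "nat \<Rightarrow>\<^sub>C real"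

definition c0 :: "linf set" where
  "c0 = {x. (\<lambda>i. apply_bcontfun x i) \<longlonglongrightarrow> 0}"

definition unit_vec :: "nat \<Rightarrow> linf" where
  "unit_vec i = Bcontfun (\<lambda>j. if j = i then 1 else 0)"

definition Gset :: "(nat \<Rightarrow> int) set" where
  "Gset = {a. (\<forall>i. a i = 1 \<or> a i = -1) \<and> finite {i. a i = -1}}"

definition Gmul :: "(nat \<Rightarrow> int) \<Rightarrow> (nat \<Rightarrow> int) \<Rightarrow> (nat \<Rightarrow> int)" where
  "Gmul g h = (\<lambda>i. g i * h i)"

definition Gone :: "nat \<Rightarrow> int" where
  "Gone = (\<lambda>i. 1)"

definition bounded_op :: "'a::real_normed_vector set \<Rightarrow> 'b::real_normed_vector set \<Rightarrow> ('a \<Rightarrow> 'b) \<Rightarrow> bool" where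
  "bounded_op V W T \<longleftrightarrow>
     (\<forall>x\<in>V. T x \<in> W) \<and>
     (\<forall>x\<in>V. \<forall>y\<in>V. T (x + y) = T x + T y) \<and>
     (\<forall>x\<in>V. \<forall>c. T (c *\<^sub>R x) = c *\<^sub>R T x) \<and>
     (\<exists>K. \<forall>x\<in>V. norm (T x) \<le> K * norm x)"

definition bounded_rep :: "'a::real_normed_vector set \<Rightarrow> ((nat \<Rightarrow> int) \<Rightarrow> 'a \<Rightarrow> 'a) \<Rightarrow> bool" where
  "bounded_rep V \<pi> \<longleftrightarrow>
     (\<forall>g\<in>Gset. bounded_op V V (\<pi> g)) \<and>
     (\<forall>g\<in>Gset. \<forall>h\<in>Gset. \<forall>x\<in>V. \<pi> (Gmul g h) x = \<pi> g (\<pi> h x)) \<and>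
     (\<forall>x\<in>V. \<pi> Gone x = x) \<and>
     (\<exists>K. \<forall>g\<in>Gset. \<forall>x\<in>V. norm (\<pi> g x) \<le> K * norm x)"

definition equivariant :: "'a::real_normed_vector set \<Rightarrow> ((nat \<Rightarrow> int) \<Rightarrow> 'a \<Rightarrow> 'a) \<Rightarrow>
    ((nat \<Rightarrow> int) \<Rightarrow> 'b::real_normed_vector \<Rightarrow> 'b) \<Rightarrow> ('a \<Rightarrow> 'b) \<Rightarrow> bool" where
  "equivariant V \<pi> \<rho> T \<longleftrightarrow> (\<forall>g\<in>Gset. \<forall>x\<in>V. T (\<pi> g x) = \<rho> g (T x))"

definition exact_seq :: "'a::real_normed_vector set \<Rightarrow> 'b::real_normed_vector set \<Rightarrow>
    'c::real_normed_vector set \<Rightarrow> ('a \<Rightarrow> 'b) \<Rightarrow> ('b \<Rightarrow> 'c) \<Rightarrow> bool" where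
  "exact_seq X Z Y i q \<longleftrightarrow>
     bounded_op X Z i \<and> bounded_op Z Y q \<and> inj_on i X \<and> q ` Z = Y \<and>
     i ` X = {z\<in>Z. q z = 0}"

definition G_exact_seq :: "'a::real_normed_vector set \<Rightarrow> 'b::real_normed_vector set \<Rightarrow>
    'c::real_normed_vector set \<Rightarrow>
    ((nat \<Rightarrow> int) \<Rightarrow> 'a \<Rightarrow> 'a) \<Rightarrow> ((nat \<Rightarrow> int) \<Rightarrow> 'b \<Rightarrow> 'b) \<Rightarrow> ((nat \<Rightarrow> int) \<Rightarrow> 'c \<Rightarrow> 'c) \<Rightarrow>
    ('a \<Rightarrow> 'b) \<Rightarrow> ('b \<Rightarrow> 'c) \<Rightarrow> bool" where
  "G_exact_seq X Z Y \<pi>X \<pi>Z \<pi>Y i q \<longleftrightarrow>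
     exact_seq X Z Y i q \<and> bounded_rep X \<pi>X \<and> bounded_rep Z \<pi>Z \<and> bounded_rep Y \<pi>Y \<and>
     equivariant X \<pi>X \<pi>Z i \<and> equivariant Z \<pi>Z \<pi>Y q"

definition splits :: "'b::real_normed_vector set \<Rightarrow> 'c::real_normed_vector set \<Rightarrow> ('b \<Rightarrow> 'c) \<Rightarrow> bool" where
  "splits Z Y q \<longleftrightarrow> (\<exists>s. bounded_op Y Z s \<and> (\<forall>y\<in>Y. q (s y) = y))"

definition G_splits :: "'b::real_normed_vector set \<Rightarrow> 'c::real_normed_vector set \<Rightarrow>
    ((nat \<Rightarrow> int) \<Rightarrow> 'b \<Rightarrow> 'b) \<Rightarrow> ((nat \<Rightarrow> int) \<Rightarrow> 'c \<Rightarrow> 'c) \<Rightarrow> ('b \<Rightarrow> 'c) \<Rightarrow> bool" where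
  "G_splits Z Y \<pi>Z \<pi>Y q \<longleftrightarrow>
     (\<exists>s. bounded_op Y Z s \<and> equivariant Y \<pi>Y \<pi>Z s \<and> (\<forall>y\<in>Y. q (s y) = y))"

definition u_act :: "(nat \<Rightarrow> int) \<Rightarrow> linf \<Rightarrow> linf" where
  "u_act g x = Bcontfun (\<lambda>i. of_int (g i) * apply_bcontfun x i)"

definition v_act :: "(nat \<Rightarrow> int) \<Rightarrow> real \<Rightarrow> real" where
  "v_act g y = y"

definition lam_act :: "(nat \<Rightarrow> int) \<Rightarrow> linf \<times> real \<Rightarrow> linf \<times> real" where
  "lam_act g z = (u_act g (fst z) + snd z *\<^sub>R (\<Sum>i\<in>{i. g i = -1}. unit_vec i), snd z)"

definition incl :: "linf \<Rightarrow> linf \<times> real" where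
  "incl x = (x, 0)"

definition proj :: "linf \<times> real \<Rightarrow> real" where
  "proj z = snd z"

end

theory Submission
  imports Defs
begin

text \<open>
  The Banach-space sequence splits trivially: any preimage of 1 spans a complement of
  the kernel of a surjection onto \<open>\<real>\<close>. Equivariantly, however, a section must send 1 to a
  vector \<open>(x, 1)\<close> fixed by every \<open>\<lambda>(g)\<close>. Taking for \<open>g\<close> the sign change in the single
  coordinate \<open>i\<close> gives \<open>x\<^sub>i = -x\<^sub>i + 1\<close>, so \<open>x\<^sub>i = 1/2\<close> for all \<open>i\<close> and \<open>x \<notin> c\<^sub>0\<close>.
\<close>

lemma apply_Bcontfun_bounded:
  fixes f :: "nat \<Rightarrow> real"
  assumes "\<And>i. \<bar>f i\<bar> \<le> b"
  shows "apply_bcontfun (Bcontfun f) = f"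
  by (rule Bcontfun_inverse, rule bcontfun_normI[where b = b]) (auto simp: assms)

lemma Gset_cases: "g \<in> Gset \<Longrightarrow> g i = 1 \<or> g i = -1"
  unfolding Gset_def by blast

lemma finite_Gset_support: "g \<in> Gset \<Longrightarrow> finite {i. g i = -1}"
  unfolding Gset_def by blast

lemma Gone_in_Gset: "Gone \<in> Gset"
  unfolding Gset_def Gone_def by simp

lemma abs_of_int_Gset: "g \<in> Gset \<Longrightarrow> \<bar>real_of_int (g i)\<bar> = 1"
  using Gset_cases[of g i] by auto

lemma Gmul_support_subset:
  assumes "g \<in> Gset" "h \<in> Gset"
  shows "{i. Gmul g h i = -1} \<subseteq> {i. g i = -1} \<union> {i. h i = -1}"
proof
  fix i
  show "i \<in> {i. Gmul g h i = -1} \<Longrightarrow> i \<in> {i. g i = -1} \<union> {i. h i = -1}"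
    using Gset_cases[OF assms(1), of i] Gset_cases[OF assms(2), of i] by (auto simp: Gmul_def)
qed

lemma Gmul_in_Gset:
  assumes "g \<in> Gset" "h \<in> Gset"
  shows "Gmul g h \<in> Gset"
  unfolding Gset_def
proof (intro CollectI conjI allI)
  show "Gmul g h i = 1 \<or> Gmul g h i = -1" for i
    using Gset_cases[OF assms(1), of i] Gset_cases[OF assms(2), of i] by (auto simp: Gmul_def)
  show "finite {i. Gmul g h i = -1}"
    using Gmul_support_subset[OF assms] finite_Gset_support[OF assms(1)]
      finite_Gset_support[OF assms(2)] by (meson finite_Un finite_subset)
qed

lemma zero_in_c0: "0 \<in> c0"
  unfolding c0_def by simp

lemma c0_add: "x \<in> c0 \<Longrightarrow> y \<in> c0 \<Longrightarrow> x + y \<in> c0"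
  unfolding c0_def using tendsto_add by fastforce

lemma c0_scaleR: "x \<in> c0 \<Longrightarrow> c *\<^sub>R x \<in> c0"
  unfolding c0_def using tendsto_mult_right_zero by fastforce

lemma apply_unit_vec: "apply_bcontfun (unit_vec i) j = (if j = i then 1 else 0)"
  unfolding unit_vec_def by (subst apply_Bcontfun_bounded[where b = 1]) auto

lemma apply_sum_unit_vec:
  "finite S \<Longrightarrow> apply_bcontfun (sum unit_vec S) j = (if j \<in> S then 1 else 0)"
  by (induction S rule: finite_induct) (auto simp: apply_unit_vec)

lemma norm_sum_unit_vec_le: "finite S \<Longrightarrow> norm (sum unit_vec S) \<le> 1"
  by (rule norm_bound) (simp add: apply_sum_unit_vec)

lemma sum_unit_vec_in_c0:
  assumes "finite S"
  shows "sum unit_vec S \<in> c0"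
proof -
  obtain k where "S \<subseteq> {..<k}"
    using assms finite_nat_bounded by blast
  then have "\<forall>\<^sub>F j in sequentially. apply_bcontfun (sum unit_vec S) j = 0"
    unfolding eventually_sequentially using assms by (auto simp: apply_sum_unit_vec intro!: exI[of _ k])
  then show ?thesis
    unfolding c0_def by (simp add: tendsto_eventually)
qed

lemma apply_u_act:
  assumes "g \<in> Gset"
  shows "apply_bcontfun (u_act g x) i = of_int (g i) * apply_bcontfun x i"
proof -
  have "\<bar>of_int (g j) * apply_bcontfun x j\<bar> \<le> norm x" for j
    using norm_bounded[of x j] by (simp add: abs_mult abs_of_int_Gset[OF assms])
  then show ?thesis
    unfolding u_act_def by (subst apply_Bcontfun_bounded) auto
qed

lemma abs_apply_u_act: "g \<in> Gset \<Longrightarrow> \<bar>apply_bcontfun (u_act g x) i\<bar> = \<bar>apply_bcontfun x i\<bar>"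
  by (simp add: apply_u_act abs_mult abs_of_int_Gset)

lemma u_act_in_c0:
  assumes "g \<in> Gset" "x \<in> c0"
  shows "u_act g x \<in> c0"
proof -
  have "(\<lambda>i. \<bar>apply_bcontfun (u_act g x) i\<bar>) \<longlonglongrightarrow> 0"
    using assms(2) tendsto_rabs_zero unfolding c0_def abs_apply_u_act[OF assms(1)] by blast
  then show ?thesis
    unfolding c0_def by (simp add: tendsto_rabs_zero_iff)
qed

lemma norm_u_act_le: "g \<in> Gset \<Longrightarrow> norm (u_act g x) \<le> norm x"
  using norm_bounded[of x] by (intro norm_bound) (simp add: abs_apply_u_act)

lemma u_act_add: "g \<in> Gset \<Longrightarrow> u_act g (x + y) = u_act g x + u_act g y"
  by (rule bcontfun_eqI) (simp add: apply_u_act algebra_simps)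

lemma u_act_scaleR: "g \<in> Gset \<Longrightarrow> u_act g (c *\<^sub>R x) = c *\<^sub>R u_act g x"
  by (rule bcontfun_eqI) (simp add: apply_u_act)

lemma u_act_Gmul:
  assumes "g \<in> Gset" "h \<in> Gset"
  shows "u_act (Gmul g h) x = u_act g (u_act h x)"
  by (rule bcontfun_eqI)
    (simp add: apply_u_act Gmul_in_Gset assms, simp add: Gmul_def)

lemma u_act_Gone: "u_act Gone x = x"
  by (rule bcontfun_eqI) (simp add: apply_u_act[OF Gone_in_Gset], simp add: Gone_def)

lemma bounded_rep_u_act: "bounded_rep c0 u_act"
  unfolding bounded_rep_def bounded_op_def
  using u_act_in_c0 u_act_add u_act_scaleR norm_u_act_le u_act_Gmul u_act_Gone
  by (auto intro!: exI[of _ 1])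

lemma bounded_rep_v_act: "bounded_rep (UNIV :: real set) v_act"
  unfolding bounded_rep_def bounded_op_def v_act_def by (auto intro!: exI[of _ 1])

text \<open>The translation part \<open>b(g) = \<Sum>{e\<^sub>i | \<alpha>\<^sub>i = -1}\<close> of \<open>\<lambda>\<close> is a 1-cocycle for \<open>u\<close>,
  which is exactly what makes \<open>\<lambda>\<close> multiplicative.\<close>

lemma sum_unit_vec_Gmul:
  assumes g: "g \<in> Gset" and h: "h \<in> Gset"
  shows "sum unit_vec {i. Gmul g h i = -1} =
    u_act g (sum unit_vec {i. h i = -1}) + sum unit_vec {i. g i = -1}"
proof (rule bcontfun_eqI)
  fix j
  have gh: "finite {i. g i * h i = -1}"
    using finite_Gset_support[OF Gmul_in_Gset[OF g h]] by (simp add: Gmul_def)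
  show "apply_bcontfun (sum unit_vec {i. Gmul g h i = -1}) j =
      apply_bcontfun (u_act g (sum unit_vec {i. h i = -1}) + sum unit_vec {i. g i = -1}) j"
    using Gset_cases[OF g, of j] Gset_cases[OF h, of j]
    by (auto simp: apply_sum_unit_vec[OF gh] apply_sum_unit_vec[OF finite_Gset_support[OF g]]
        apply_sum_unit_vec[OF finite_Gset_support[OF h]] apply_u_act[OF g] Gmul_def)
qed

lemma norm_lam_act_le:
  assumes g: "g \<in> Gset"
  shows "norm (lam_act g z) \<le> 3 * norm z"
proof -
  obtain x y where z: "z = (x, y)" by fastforce
  let ?b = "sum unit_vec {i. g i = -1}"
  have "norm (u_act g x + y *\<^sub>R ?b) \<le> norm (u_act g x) + \<bar>y\<bar> * norm ?b"
    by (metis norm_scaleR norm_triangle_ineq)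
  also have "\<dots> \<le> norm x + \<bar>y\<bar>"
    using norm_u_act_le[OF g, of x] norm_sum_unit_vec_le[OF finite_Gset_support[OF g]]
    by (meson abs_ge_zero add_mono mult_left_le)
  finally have "norm (lam_act g z) \<le> norm x + \<bar>y\<bar> + \<bar>y\<bar>"
    using norm_Pair_le[of "u_act g x + y *\<^sub>R ?b" y] by (simp add: lam_act_def z)
  moreover have "norm x \<le> norm z" "\<bar>y\<bar> \<le> norm z"
    using norm_fst_le[of x y] norm_snd_le[of y x] z by auto
  ultimately show ?thesis
    by linarith
qed

lemma bounded_op_lam_act:
  assumes g: "g \<in> Gset"
  shows "bounded_op (c0 \<times> UNIV) (c0 \<times> UNIV) (lam_act g)"
  unfolding bounded_op_def
proof (intro conjI ballI allI)
  show "lam_act g z \<in> c0 \<times> UNIV" if "z \<in> c0 \<times> UNIV" for z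
    using that g unfolding lam_act_def
    by (auto intro!: c0_add c0_scaleR u_act_in_c0 sum_unit_vec_in_c0 finite_Gset_support)
  show "lam_act g (z + w) = lam_act g z + lam_act g w" for z w
    unfolding lam_act_def by (simp add: u_act_add[OF g] scaleR_add_left)
  show "lam_act g (c *\<^sub>R z) = c *\<^sub>R lam_act g z" for c z
    unfolding lam_act_def by (simp add: u_act_scaleR[OF g] scaleR_add_right)
  show "\<exists>K. \<forall>z\<in>c0 \<times> UNIV. norm (lam_act g z) \<le> K * norm z"
    using norm_lam_act_le[OF g] by blast
qed

lemma lam_act_Gmul:
  "g \<in> Gset \<Longrightarrow> h \<in> Gset \<Longrightarrow> lam_act (Gmul g h) z = lam_act g (lam_act h z)"
  unfolding lam_act_def
  by (simp add: sum_unit_vec_Gmul u_act_Gmul u_act_add u_act_scaleR algebra_simps)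

lemma lam_act_Gone: "lam_act Gone z = z"
  unfolding lam_act_def Gone_def u_act_Gone[unfolded Gone_def] by simp

lemma bounded_rep_lam_act: "bounded_rep (c0 \<times> UNIV) lam_act"
  unfolding bounded_rep_def
  using bounded_op_lam_act lam_act_Gmul lam_act_Gone norm_lam_act_le by blast

lemma exact_seq_incl_proj: "exact_seq c0 (c0 \<times> UNIV) UNIV incl proj"
  unfolding exact_seq_def bounded_op_def incl_def proj_def
proof (intro conjI)
  show "\<exists>K. \<forall>x\<in>c0. norm (x, 0::real) \<le> K * norm x"
    by (auto intro!: exI[of _ 1] simp: norm_Pair)
  show "\<exists>K. \<forall>z\<in>c0 \<times> (UNIV :: real set). norm (snd z) \<le> K * norm z"
    by (auto intro!: exI[of _ 1]) (metis norm_snd_le real_norm_def)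
  show "snd ` (c0 \<times> UNIV) = (UNIV :: real set)"
    using zero_in_c0 by auto
qed (auto simp: inj_on_def)

lemma G_exact_seq_incl_proj: "G_exact_seq c0 (c0 \<times> UNIV) UNIV u_act lam_act v_act incl proj"
  unfolding G_exact_seq_def equivariant_def
  using exact_seq_incl_proj bounded_rep_lam_act bounded_rep_u_act bounded_rep_v_act
  by (auto simp: incl_def proj_def lam_act_def v_act_def)

lemma splits_onto_real:
  fixes q :: "'z::real_normed_vector \<Rightarrow> real"
  assumes "surj q" and "\<And>c z. q (c *\<^sub>R z) = c * q z"
  shows "splits UNIV UNIV q"
proof -
  obtain z0 where "q z0 = 1"
    using \<open>surj q\<close> by (metis surjD)
  then show ?thesis
    unfolding splits_def bounded_op_def
    by (intro exI[of _ "\<lambda>y. y *\<^sub>R z0"]) (auto simp: assms(2) algebra_simps intro!: exI[of _ "norm z0"])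
qed

lemma exact_seq_onto_real_splits:
  fixes i :: "'x::real_normed_vector \<Rightarrow> 'z::real_normed_vector" and q :: "'z \<Rightarrow> real"
  assumes "exact_seq X UNIV UNIV i q"
  shows "splits UNIV UNIV q"
  using assms unfolding exact_seq_def bounded_op_def by (intro splits_onto_real) auto

lemma splits_incl_proj: "splits (c0 \<times> UNIV) UNIV proj"
  unfolding splits_def bounded_op_def proj_def
  by (intro exI[of _ "\<lambda>y. (0, y)"]) (auto simp: zero_in_c0 norm_Pair intro!: exI[of _ 1])

lemma lam_act_fixed_coordinates:
  assumes fixed: "\<forall>g\<in>Gset. lam_act g (x, 1) = (x, 1)"
  shows "apply_bcontfun x i = 1/2"
proof -
  define g where "g = Gone(i := -1)"
  have g: "g \<in> Gset"
    unfolding g_def Gset_def Gone_def by auto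
  have "{j. g j = -1} = {i}"
    unfolding g_def Gone_def by auto
  then have "x = u_act g x + unit_vec i"
    using fixed g by (auto simp: lam_act_def)
  then have "apply_bcontfun x i = apply_bcontfun (u_act g x + unit_vec i) i"
    by (rule arg_cong)
  also have "\<dots> = - apply_bcontfun x i + 1"
    using apply_u_act[OF g, of x i] by (simp add: apply_unit_vec g_def)
  finally show ?thesis by linarith
qed

lemma not_G_splits_lam_act: "\<not> G_splits (c0 \<times> UNIV) UNIV lam_act v_act proj"
proof
  assume "G_splits (c0 \<times> UNIV) UNIV lam_act v_act proj"
  then obtain s where s: "bounded_op UNIV (c0 \<times> UNIV) s"
    and equiv: "equivariant UNIV v_act lam_act s" and right_inverse: "\<forall>y. proj (s y) = y"
    unfolding G_splits_def by auto
  obtain x where s1: "s 1 = (x, 1)"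
    using right_inverse unfolding proj_def by (metis prod.collapse)
  have "x \<in> c0"
    using s s1 unfolding bounded_op_def by (metis UNIV_I mem_Sigma_iff)
  moreover have "\<forall>g\<in>Gset. lam_act g (x, 1) = (x, 1)"
  proof
    fix g assume "g \<in> Gset"
    then have "s (v_act g 1) = lam_act g (s 1)"
      using equiv unfolding equivariant_def by blast
    then show "lam_act g (x, 1) = (x, 1)"
      by (simp add: v_act_def s1)
  qed
  then have "(\<lambda>i. apply_bcontfun x i) = (\<lambda>_. 1/2)"
    using lam_act_fixed_coordinates by blast
  ultimately have "(\<lambda>_. 1/2 :: real) \<longlonglongrightarrow> 0"
    unfolding c0_def by simp
  then show False
    by (simp add: LIMSEQ_const_iff)
qed

theorem mainTheorem18:
  shows "bounded_rep (c0 \<times> UNIV) lam_act \<and>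
    G_exact_seq c0 (c0 \<times> UNIV) UNIV u_act lam_act v_act incl proj \<and>
    splits (c0 \<times> UNIV) UNIV proj \<and>
    \<not> G_splits (c0 \<times> UNIV) UNIV lam_act v_act proj \<and>
    (\<forall>(i :: linf \<Rightarrow> 'z::banach) (q :: 'z \<Rightarrow> real).
        exact_seq c0 UNIV UNIV i q \<longrightarrow> splits UNIV UNIV q) \<and>
    (\<exists>(i :: linf \<Rightarrow> linf \<times> real) (q :: linf \<times> real \<Rightarrow> real) \<pi>.
        G_exact_seq c0 (c0 \<times> UNIV) UNIV u_act \<pi> v_act i q \<and>
        \<not> G_splits (c0 \<times> UNIV) UNIV \<pi> v_act q)"
proof (intro conjI allI impI)
  show "splits UNIV UNIV q" if "exact_seq c0 UNIV UNIV i q"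
    for i :: "linf \<Rightarrow> 'z" and q :: "'z \<Rightarrow> real"
    using that by (rule exact_seq_onto_real_splits)
  show "\<exists>(i :: linf \<Rightarrow> linf \<times> real) (q :: linf \<times> real \<Rightarrow> real) \<pi>. G_exact_seq c0 (c0 \<times> UNIV) UNIV u_act \<pi> v_act i q \<and>
      \<not> G_splits (c0 \<times> UNIV) UNIV \<pi> v_act q"
    using G_exact_seq_incl_proj not_G_splits_lam_act by blast
qed (fact bounded_rep_lam_act G_exact_seq_incl_proj splits_incl_proj not_G_splits_lam_act)+

end
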